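(* Let $X$ be a real Hilbert space with closed unit ball $\mathcal B$, $\Omega\subseteq X$ a closed symmetric convex set, $V\subseteq X$ a subspace, and $R,Z,\lambda\ge1$. If (i) $\mathcal B/V\subseteq R(\Omega\cap\mathcal B)/V$ and (ii) $\Omega\cap V\subseteq Z\mathcal B$, then $(\Omega+\lambda\mathcal B)\cap V\subseteq Z(3R\lambda+1)\mathcal B$.
   Context: For $A\subseteq X$, $A/V=\{a+V:a\in A\}$; (i) means every element of $\mathcal B$ differs by an element of $V$ from some element of $R(\Omega\cap\mathcal B)$. *)

theory Defs
  imports "HOL-Analysis.Analysis"
begin

end

theory Submission
  imports Defs
begin

text \<open>Write a point of \<open>(\<Omega> + \<lambda>\<B>) \<inter> V\<close> as \<open>x = w + \<lambda>b\<close> and use (i) to pick \<open>u \<in> \<Omega> \<inter> \<B>\<close>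
  with \<open>v = b - Ru \<in> V\<close>. Then \<open>s = w + \<lambda>Ru = x - \<lambda>v\<close> lies in \<open>V\<close>, and \<open>s/(1 + \<lambda>R)\<close> is a
  convex combination of \<open>w\<close> and \<open>u\<close>, hence lies in \<open>\<Omega> \<inter> V\<close>; by (ii), \<open>|s| \<le> Z(1 + \<lambda>R)\<close>.
  Together with \<open>|\<lambda>v| \<le> \<lambda>(1 + R) \<le> 2Z\<lambda>R\<close> this gives the bound.\<close>

lemma scaleR_image_cball_0_1:
  "c > 0 \<Longrightarrow> (\<lambda>y. c *\<^sub>R y) ` cball 0 1 = cball (0::'a::real_normed_vector) c"
  by (simp add: cball_scale)

lemma convex_normalized_add_scaleR_mem:
  assumes "convex \<Omega>" and "w \<in> \<Omega>" and "u \<in> \<Omega>" and "a \<ge> 0"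
  shows "inverse (1 + a) *\<^sub>R (w + a *\<^sub>R u) \<in> \<Omega>"
proof -
  have "inverse (1 + a) *\<^sub>R (w + a *\<^sub>R u) = (1 / (1 + a)) *\<^sub>R w + (a / (1 + a)) *\<^sub>R u"
    by (simp add: algebra_simps divide_inverse)
  moreover have "1 / (1 + a) + a / (1 + a) = 1"
    using \<open>a \<ge> 0\<close> by (simp add: field_simps)
  ultimately show ?thesis
    using assms unfolding convex_def by (metis divide_nonneg_nonneg add_nonneg_nonneg zero_le_one)
qed

lemma norm_le_if_shift_in_subspace:
  fixes \<Omega> V :: "'a::real_normed_vector set"
  assumes "convex \<Omega>" and "subspace V" and "R \<ge> 0" and "lam \<ge> 0"
    and bound: "\<And>t. t \<in> \<Omega> \<inter> V \<Longrightarrow> norm t \<le> Z"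
    and "w \<in> \<Omega>" and "u \<in> \<Omega>" and "norm u \<le> 1" and "norm b \<le> 1"
    and v: "b - R *\<^sub>R u \<in> V" and x: "w + lam *\<^sub>R b \<in> V"
  shows "norm (w + lam *\<^sub>R b) \<le> Z * (1 + lam * R) + lam * (1 + R)"
proof -
  define s where "s = w + (lam * R) *\<^sub>R u"
  have s_eq: "s = (w + lam *\<^sub>R b) - lam *\<^sub>R (b - R *\<^sub>R u)"
    unfolding s_def by (simp add: algebra_simps)
  have "s \<in> V"
    unfolding s_eq using \<open>subspace V\<close> v x by (simp add: subspace_diff subspace_scale)
  have pos: "1 + lam * R > 0"
    using \<open>R \<ge> 0\<close> \<open>lam \<ge> 0\<close> by (simp add: add_pos_nonneg)
  have "inverse (1 + lam * R) *\<^sub>R s \<in> \<Omega> \<inter> V"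
    using convex_normalized_add_scaleR_mem[OF \<open>convex \<Omega>\<close> \<open>w \<in> \<Omega>\<close> \<open>u \<in> \<Omega>\<close>] \<open>s \<in> V\<close>
      \<open>subspace V\<close> \<open>R \<ge> 0\<close> \<open>lam \<ge> 0\<close>
    unfolding s_def by (simp add: subspace_scale)
  then have "norm (inverse (1 + lam * R) *\<^sub>R s) \<le> Z"
    using bound by blast
  then have "norm s / (1 + lam * R) \<le> Z"
    using pos by (simp add: divide_inverse mult.commute)
  then have norm_s: "norm s \<le> Z * (1 + lam * R)"
    using pos by (simp add: pos_divide_le_eq)
  have "norm (b - R *\<^sub>R u) \<le> 1 + R"
    using norm_triangle_ineq4[of b "R *\<^sub>R u"] mult_left_le[of "norm u" R]
      \<open>norm b \<le> 1\<close> \<open>norm u \<le> 1\<close> \<open>R \<ge> 0\<close>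
    by simp
  then have "norm (lam *\<^sub>R (b - R *\<^sub>R u)) \<le> lam * (1 + R)"
    using \<open>lam \<ge> 0\<close> by (simp add: mult_left_mono)
  moreover have "norm (w + lam *\<^sub>R b) \<le> norm s + norm (lam *\<^sub>R (b - R *\<^sub>R u))"
    using norm_triangle_ineq[of s "lam *\<^sub>R (b - R *\<^sub>R u)"] unfolding s_eq by simp
  ultimately show ?thesis
    using norm_s by linarith
qed

theorem lemma9p11:
  fixes \<Omega> V :: "'a::{real_inner, complete_space} set"
    and R Z lam :: real
  assumes "closed \<Omega>" and "\<And>x. x \<in> \<Omega> \<Longrightarrow> - x \<in> \<Omega>" and "convex \<Omega>"
    and "subspace V"
    and "R \<ge> 1" and "Z \<ge> 1" and "lam \<ge> 1"
    and i: "\<forall>b \<in> cball 0 1. \<exists>w \<in> (\<lambda>y. R *\<^sub>R y) ` (\<Omega> \<inter> cball 0 1). b - w \<in> V"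
    and ii: "\<Omega> \<inter> V \<subseteq> (\<lambda>y. Z *\<^sub>R y) ` cball 0 1"
  shows "{w + lam *\<^sub>R b | w b. w \<in> \<Omega> \<and> b \<in> cball 0 1} \<inter> V
           \<subseteq> (\<lambda>y. (Z * (3 * R * lam + 1)) *\<^sub>R y) ` cball 0 1"
proof
  fix x assume "x \<in> {w + lam *\<^sub>R b | w b. w \<in> \<Omega> \<and> b \<in> cball 0 1} \<inter> V"
  then obtain w b where x: "x = w + lam *\<^sub>R b" and "w + lam *\<^sub>R b \<in> V"
    and "w \<in> \<Omega>" "b \<in> cball 0 1"
    by auto
  with i obtain u where "u \<in> \<Omega> \<inter> cball 0 1" "b - R *\<^sub>R u \<in> V"
    by blast
  moreover have "\<And>t. t \<in> \<Omega> \<inter> V \<Longrightarrow> norm t \<le> Z"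
    using ii \<open>Z \<ge> 1\<close> by (auto simp: scaleR_image_cball_0_1)
  ultimately have norm_x: "norm x \<le> Z * (1 + lam * R) + lam * (1 + R)"
    unfolding x using \<open>w \<in> \<Omega>\<close> \<open>b \<in> cball 0 1\<close> \<open>w + lam *\<^sub>R b \<in> V\<close> \<open>R \<ge> 1\<close> \<open>lam \<ge> 1\<close>
    by (intro norm_le_if_shift_in_subspace[OF \<open>convex \<Omega>\<close> \<open>subspace V\<close>]) auto
  have "lam * (1 + R) \<le> (2 * R * lam) * 1"
    using \<open>R \<ge> 1\<close> \<open>lam \<ge> 1\<close> by (simp add: algebra_simps)
  also have "\<dots> \<le> (2 * R * lam) * Z"
    using \<open>R \<ge> 1\<close> \<open>Z \<ge> 1\<close> \<open>lam \<ge> 1\<close> by (intro mult_left_mono) auto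
  finally have "norm x \<le> Z * (3 * R * lam + 1)"
    using norm_x by (simp add: algebra_simps)
  moreover have "Z * (3 * R * lam + 1) > 0"
    using \<open>R \<ge> 1\<close> \<open>Z \<ge> 1\<close> \<open>lam \<ge> 1\<close> by (simp add: add_pos_pos)
  ultimately show "x \<in> (\<lambda>y. (Z * (3 * R * lam + 1)) *\<^sub>R y) ` cball 0 1"
    by (simp add: scaleR_image_cball_0_1)
qed

end
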